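(* The subalgebra $\mathcal{B}^{\mp}\subset\mathrm{Y}^{\mp}(2)$ generated by the center $Z\mathrm{Y}^{\mp}(2)$ and all coefficients of the series $\sigma_1(u,F_{11})$ coincides with the subalgebra generated by $Z\mathrm{Y}^{\mp}(2)$ and the elements $s_{11}^{(2m+1)}$, $m\in\mathbb{Z}_{\ge0}$.
   Context: $\mathrm{Y}(2)$ is the algebra generated by $t^{(r)}_{ij}$, $i,j\in\{-1,1\}$, $r\ge1$, with relations $[t^{(r+1)}_{ij},t^{(s)}_{kl}]-[t^{(r)}_{ij},t^{(s+1)}_{kl}]=t^{(r)}_{kj}t^{(s)}_{il}-t^{(s)}_{kj}t^{(r)}_{il}$, $t^{(0)}_{ij}=\delta_{ij}$; $t_{ij}(u)=\sum_{r\ge0}t^{(r)}_{ij}u^{-r}$. In the symplectic case (sign $-$) $\theta_{ij}=\mathrm{sgn}(i)\mathrm{sgn}(j)$, in the orthogonal case (sign $+$) $\theta_{ij}=1$. Put $s_{ij}(u)=\sum_{a\in\{\pm1\}}\theta_{aj}t_{ia}(u)t_{-j,-a}(-u)=\delta_{ij}+\sum_{M\ge1}s^{(M)}_{ij}u^{-M}$; $\mathrm{Y}^{\mp}(2)$ is the subalgebra of $\mathrm{Y}(2)$ generated by all $s^{(M)}_{ij}$, and $Z\mathrm{Y}^{\mp}(2)$ its center. Let $W=\mathbb{C}^2$ with basis $e_{-1},e_1$, $E_{ij}$ the matrix units, transposition $E_{ij}^t=\theta_{ij}E_{-j,-i}$, $S(u)=\sum_{i,j}s_{ij}(u)\otimes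 E_{ij}$, $P=\sum_{i,j}E_{ij}\otimes E_{ji}$, $A_2=\frac12(1-P)$ on $W^{\otimes2}$, $F_{11}=E_{11}-E_{-1,-1}$. Then $\sigma_1(u,F_{11})=\mathrm{tr}\big[A_2\, S_1(u)\,\big(1-\tfrac{1}{3-2u}\sum_{i,j}E^t_{ij}\otimes E_{ji}\big)\,(F_{11})_2\big]$, where $S_1(u)$ acts on the first and $(F_{11})_2$ on the second tensor factor, the trace is over $W^{\otimes 2}$, and $\sigma_1$ is expanded as a series in $u^{-1}$ with coefficients in $\mathrm{Y}^{\mp}(2)$ (this $\mathcal{B}^{\mp}$ is the Bethe subalgebra for $C=F_{11}$). *)

theory Defs
  imports Complex_Main
begin

text \<open>Generators t^(r)_ij are encoded as triples (i,j,r) with i,j in {-1,1}, r >= 1.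
  Elements of the free algebra are finitely supported functions from words
  (lists of generators) to complex numbers; multiplication is concatenation.\<close>

type_synonym gen = "int \<times> int \<times> nat"
type_synonym fa = "gen list \<Rightarrow> complex"

definition idx :: "int set" where "idx = {-1, 1}"

definition gens :: "gen set" where
  "gens = {(i, j, r). i \<in> idx \<and> j \<in> idx \<and> r \<ge> 1}"

definition fpoly :: "fa set" where
  "fpoly = {p. finite {w. p w \<noteq> 0} \<and> (\<forall>w. p w \<noteq> 0 \<longrightarrow> set w \<subseteq> gens)}"

definition pzero :: fa where "pzero = (\<lambda>w. 0)"
definition pone :: fa where "pone = (\<lambda>w. if w = [] then 1 else 0)"
definition pgen :: "gen \<Rightarrow> fa" where "pgen g = (\<lambda>w. if w = [g] then 1 else 0)"
definition padd :: "fa \<Rightarrow> fa \<Rightarrow> fa" where "padd p q = (\<lambda>w. p w + q w)"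
definition psmul :: "complex \<Rightarrow> fa \<Rightarrow> fa" where "psmul c p = (\<lambda>w. c * p w)"
definition psub :: "fa \<Rightarrow> fa \<Rightarrow> fa" where "psub p q = (\<lambda>w. p w - q w)"
definition psum :: "('b \<Rightarrow> fa) \<Rightarrow> 'b set \<Rightarrow> fa" where
  "psum F A = (\<lambda>w. \<Sum>x\<in>A. F x w)"
definition pmul :: "fa \<Rightarrow> fa \<Rightarrow> fa" where
  "pmul p q = (\<lambda>w. \<Sum>k\<le>length w. p (take k w) * q (drop k w))"

definition comm :: "fa \<Rightarrow> fa \<Rightarrow> fa" where "comm a b = psub (pmul a b) (pmul b a)"

definition tt :: "int \<Rightarrow> int \<Rightarrow> nat \<Rightarrow> fa" where
  "tt i j r = (if r = 0 then (if i = j then pone else pzero) else pgen (i, j, r))"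

definition yrel :: "int \<Rightarrow> int \<Rightarrow> int \<Rightarrow> int \<Rightarrow> nat \<Rightarrow> nat \<Rightarrow> fa" where
  "yrel i j k l r s =
     psub (psub (comm (tt i j (r + 1)) (tt k l s)) (comm (tt i j r) (tt k l (s + 1))))
          (psub (pmul (tt k j r) (tt i l s)) (pmul (tt k j s) (tt i l r)))"

definition relators :: "fa set" where
  "relators = {yrel i j k l r s | i j k l r s. i \<in> idx \<and> j \<in> idx \<and> k \<in> idx \<and> l \<in> idx}"

inductive_set yideal :: "fa set" where
  zero: "pzero \<in> yideal"
| rel: "\<rho> \<in> relators \<Longrightarrow> \<rho> \<in> yideal"
| add: "p \<in> yideal \<Longrightarrow> q \<in> yideal \<Longrightarrow> padd p q \<in> yideal"
| smul: "p \<in> yideal \<Longrightarrow> psmul c p \<in> yideal"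
| lmul: "a \<in> fpoly \<Longrightarrow> p \<in> yideal \<Longrightarrow> pmul a p \<in> yideal"
| rmul: "a \<in> fpoly \<Longrightarrow> p \<in> yideal \<Longrightarrow> pmul p a \<in> yideal"

inductive_set falg :: "fa set \<Rightarrow> fa set" for X :: "fa set" where
  one: "pone \<in> falg X"
| gen: "x \<in> X \<Longrightarrow> x \<in> falg X"
| add: "p \<in> falg X \<Longrightarrow> q \<in> falg X \<Longrightarrow> padd p q \<in> falg X"
| smul: "p \<in> falg X \<Longrightarrow> psmul c p \<in> falg X"
| mul: "p \<in> falg X \<Longrightarrow> q \<in> falg X \<Longrightarrow> pmul p q \<in> falg X"

text \<open>The subalgebra of Y(2) = free algebra / yideal generated by (the images of) X,
  represented by the set of all its representatives in the free algebra.\<close>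
definition ygen :: "fa set \<Rightarrow> fa set" where
  "ygen X = {p \<in> fpoly. \<exists>q \<in> falg X. psub p q \<in> yideal}"

text \<open>A series is given by its coefficients: n-th entry = coefficient of u^{-n}.\<close>
type_synonym ser = "nat \<Rightarrow> fa"

definition ser_sum :: "('b \<Rightarrow> ser) \<Rightarrow> 'b set \<Rightarrow> ser" where
  "ser_sum F A = (\<lambda>n. psum (\<lambda>x. F x n) A)"
definition ser_mul :: "ser \<Rightarrow> ser \<Rightarrow> ser" where
  "ser_mul A B = (\<lambda>n. psum (\<lambda>m. pmul (A m) (B (n - m))) {..n})"
definition ser_smul :: "complex \<Rightarrow> ser \<Rightarrow> ser" where
  "ser_smul c A = (\<lambda>n. psmul c (A n))"
definition cser :: "(nat \<Rightarrow> complex) \<Rightarrow> ser" where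
  "cser f = (\<lambda>n. psmul (f n) pone)"

text \<open>theta_ij: sympl = True is the symplectic case (sign -), False the orthogonal (sign +).\<close>
definition theta :: "bool \<Rightarrow> int \<Rightarrow> int \<Rightarrow> complex" where
  "theta sympl i j = (if sympl then of_int (sgn i * sgn j) else 1)"

definition tser :: "int \<Rightarrow> int \<Rightarrow> ser" where "tser i j = (\<lambda>r. tt i j r)"
text \<open>t_ij(-u)\<close>
definition tnser :: "int \<Rightarrow> int \<Rightarrow> ser" where "tnser i j = (\<lambda>r. psmul ((-1) ^ r) (tt i j r))"

definition sser :: "bool \<Rightarrow> int \<Rightarrow> int \<Rightarrow> ser" where
  "sser sympl i j = ser_sum (\<lambda>a. ser_smul (theta sympl a j) (ser_mul (tser i a) (tnser (- j) (- a)))) idx"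

definition Sgens :: "bool \<Rightarrow> fa set" where
  "Sgens sympl = {sser sympl i j M | i j M. i \<in> idx \<and> j \<in> idx \<and> M \<ge> 1}"

definition Ypm :: "bool \<Rightarrow> fa set" where "Ypm sympl = ygen (Sgens sympl)"

definition ZYpm :: "bool \<Rightarrow> fa set" where
  "ZYpm sympl = {z \<in> Ypm sympl. \<forall>x \<in> Ypm sympl. comm z x \<in> yideal}"

text \<open>Matrices on W (x) W with basis e_a (x) e_b, indices (a,b) in idx x idx.\<close>
type_synonym cmat2 = "int \<Rightarrow> int \<Rightarrow> complex"
type_synonym cmat4 = "int \<times> int \<Rightarrow> int \<times> int \<Rightarrow> complex"
type_synonym smat4 = "int \<times> int \<Rightarrow> int \<times> int \<Rightarrow> ser"

definition Emat :: "int \<Rightarrow> int \<Rightarrow> cmat2" where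
  "Emat i j = (\<lambda>a b. if a = i \<and> b = j then 1 else 0)"
definition Id2 :: cmat2 where "Id2 = (\<lambda>a b. if a = b then 1 else 0)"
definition tens :: "cmat2 \<Rightarrow> cmat2 \<Rightarrow> cmat4" where
  "tens X Y = (\<lambda>p q. X (fst p) (fst q) * Y (snd p) (snd q))"
definition Id4 :: cmat4 where "Id4 = (\<lambda>p q. if p = q then 1 else 0)"
definition Pmat :: cmat4 where
  "Pmat = (\<lambda>p q. \<Sum>i\<in>idx. \<Sum>j\<in>idx. tens (Emat i j) (Emat j i) p q)"
definition A2 :: cmat4 where "A2 = (\<lambda>p q. (Id4 p q - Pmat p q) / 2)"
definition Etr :: "bool \<Rightarrow> int \<Rightarrow> int \<Rightarrow> cmat2" where
  "Etr sympl i j = (\<lambda>a b. theta sympl i j * Emat (- j) (- i) a b)"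
definition Qmat :: "bool \<Rightarrow> cmat4" where
  "Qmat sympl = (\<lambda>p q. \<Sum>i\<in>idx. \<Sum>j\<in>idx. tens (Etr sympl i j) (Emat j i) p q)"
definition F11 :: cmat2 where "F11 = (\<lambda>a b. Emat 1 1 a b - Emat (-1) (-1) a b)"
definition F11_2 :: cmat4 where "F11_2 = tens Id2 F11"

text \<open>Coefficients of the expansion of 1/(3-2u) in u^{-1}:
  1/(3-2u) = - sum_{n>=1} 3^(n-1)/2^n u^{-n}.\<close>
definition cc :: "nat \<Rightarrow> complex" where
  "cc n = (if n = 0 then 0 else - (3 ^ (n - 1) / 2 ^ n))"

definition liftc :: "cmat4 \<Rightarrow> smat4" where
  "liftc X = (\<lambda>p q. cser (\<lambda>n. if n = 0 then X p q else 0))"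

definition Mfac :: "bool \<Rightarrow> smat4" where
  "Mfac sympl = (\<lambda>p q. cser (\<lambda>n. (if n = 0 then Id4 p q else 0) - cc n * Qmat sympl p q))"

definition S1 :: "bool \<Rightarrow> smat4" where
  "S1 sympl = (\<lambda>p q. if snd p = snd q then sser sympl (fst p) (fst q) else (\<lambda>n. pzero))"

definition idx2 :: "(int \<times> int) set" where "idx2 = idx \<times> idx"

definition mmul :: "smat4 \<Rightarrow> smat4 \<Rightarrow> smat4" where
  "mmul X Y = (\<lambda>p q. ser_sum (\<lambda>r. ser_mul (X p r) (Y r q)) idx2)"
definition mtr :: "smat4 \<Rightarrow> ser" where
  "mtr X = ser_sum (\<lambda>p. X p p) idx2"

definition sigma1 :: "bool \<Rightarrow> ser" where
  "sigma1 sympl = mtr (mmul (mmul (mmul (liftc A2) (S1 sympl)) (Mfac sympl)) (liftc F11_2))"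

end

theory Submission
  imports Defs
begin

(* The trace defining sigma_1(u,F_11) is a finite 4x4 computation giving
   sigma_1(u,F_11) = f(u) (s_11(u) - s_{-1,-1}(u)) for a scalar series f(u) with constant
   term -1/2; this relation is triangular, so the coefficients of sigma_1 and those of
   D(u) = s_11(u) - s_{-1,-1}(u) generate the same subalgebra.
   Specialising the defining relation of Y(2) at v = -u yields the symmetry relation
   2u (s_11(u) - s_{-1,-1}(-u)) = eps (s_{-1,-1}(u) - s_{-1,-1}(-u)), eps = -1 (symplectic)
   or 1 (orthogonal). Its odd coefficients give s_{-1,-1}^(2m+1) = -s_11^(2m+1), hence
   D^(2m+1) = 2 s_11^(2m+1), and its even ones D^(2m+2) = -eps s_11^(2m+1). So modulo the
   defining ideal the coefficients of D(u) and the elements s_11^(2m+1) span the same space;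
   the centre is carried along unchanged. *)

section \<open>Arithmetic in the free algebra\<close>

text \<open>Not declared \<open>[simp]\<close>: the simplifier would also rewrite unapplied occurrences,
  turning e.g. \<open>padd p q\<close> into \<open>\<lambda>w. p w + q w\<close>.\<close>

lemma pzero_apply: "pzero w = 0" by (simp add: pzero_def)
lemma padd_apply: "padd p q w = p w + q w" by (simp add: padd_def)
lemma psub_apply: "psub p q w = p w - q w" by (simp add: psub_def)
lemma psmul_apply: "psmul c p w = c * p w" by (simp add: psmul_def)
lemma psum_apply: "psum F A w = (\<Sum>x\<in>A. F x w)" by (simp add: psum_def)

lemmas fa_pointwise = pzero_apply padd_apply psub_apply psmul_apply psum_apply

lemma psum_empty: "psum F {} = pzero"
  by (simp add: psum_def pzero_def)

lemma psum_insert: "finite A \<Longrightarrow> x \<notin> A \<Longrightarrow> psum F (insert x A) = padd (F x) (psum F A)"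
  by (rule ext) (simp add: fa_pointwise)

lemma psub_self [simp]: "psub p p = pzero"
  by (rule ext) (simp add: fa_pointwise)

lemma pmul_pone_left [simp]: "pmul pone q = q"
proof (rule ext)
  fix w
  have "pmul pone q w = (\<Sum>k\<le>length w. if k = 0 then q w else 0)"
    unfolding pmul_def by (rule sum.cong) (auto simp: pone_def)
  then show "pmul pone q w = q w" by simp
qed

lemma pmul_pone_right [simp]: "pmul q pone = q"
proof (rule ext)
  fix w
  have "pmul q pone w = (\<Sum>k\<le>length w. if k = length w then q w else 0)"
    unfolding pmul_def by (rule sum.cong) (auto simp: pone_def)
  then show "pmul q pone w = q w" by simp
qed

lemma pmul_pzero_left [simp]: "pmul pzero q = pzero"
  by (rule ext) (simp add: fa_pointwise pmul_def)

lemma pmul_pzero_right [simp]: "pmul q pzero = pzero"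
  by (rule ext) (simp add: fa_pointwise pmul_def)

lemma pmul_psmul_left: "pmul (psmul c p) q = psmul c (pmul p q)"
  by (rule ext) (simp add: fa_pointwise pmul_def sum_distrib_left algebra_simps)

lemma pmul_psmul_right: "pmul p (psmul c q) = psmul c (pmul p q)"
  by (rule ext) (simp add: fa_pointwise pmul_def sum_distrib_left algebra_simps)

lemma pmul_psub_left: "pmul (psub p p') q = psub (pmul p q) (pmul p' q)"
  by (rule ext) (simp add: fa_pointwise pmul_def algebra_simps sum_subtractf)

lemma pmul_psub_right: "pmul q (psub p p') = psub (pmul q p) (pmul q p')"
  by (rule ext) (simp add: fa_pointwise pmul_def algebra_simps sum_subtractf)

lemma comm_pone_left [simp]: "comm pone x = pzero"
  by (simp add: comm_def)

lemma comm_pone_right [simp]: "comm x pone = pzero"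
  by (simp add: comm_def)

lemma comm_pzero_left [simp]: "comm pzero x = pzero"
  by (simp add: comm_def)

lemma comm_pzero_right [simp]: "comm x pzero = pzero"
  by (simp add: comm_def)

lemma fpolyI: "finite {w. p w \<noteq> 0} \<Longrightarrow> (\<And>w. p w \<noteq> 0 \<Longrightarrow> set w \<subseteq> gens) \<Longrightarrow> p \<in> fpoly"
  by (auto simp: fpoly_def)

lemma fpoly_finite_support: "p \<in> fpoly \<Longrightarrow> finite {w. p w \<noteq> 0}"
  by (simp add: fpoly_def)

lemma fpoly_support_gens: "p \<in> fpoly \<Longrightarrow> p w \<noteq> 0 \<Longrightarrow> set w \<subseteq> gens"
  by (simp add: fpoly_def)

lemma fpoly_pzero [simp]: "pzero \<in> fpoly"
  by (simp add: fpoly_def pzero_apply)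

lemma fpoly_pone [simp]: "pone \<in> fpoly"
  by (simp add: fpoly_def pone_def)

lemma fpoly_pgen: "g \<in> gens \<Longrightarrow> pgen g \<in> fpoly"
  by (simp add: fpoly_def pgen_def)

lemma fpoly_if_support_within:
  assumes "p \<in> fpoly" "q \<in> fpoly" "\<And>w. r w \<noteq> 0 \<Longrightarrow> p w \<noteq> 0 \<or> q w \<noteq> 0"
  shows "r \<in> fpoly"
proof (rule fpolyI)
  show "finite {w. r w \<noteq> 0}"
    by (rule finite_subset[of _ "{w. p w \<noteq> 0} \<union> {w. q w \<noteq> 0}"])
      (use assms in \<open>auto dest: fpoly_finite_support\<close>)
  show "set w \<subseteq> gens" if "r w \<noteq> 0" for w
    using assms(3)[OF that] assms(1,2) fpoly_support_gens by blast
qed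

lemma fpoly_padd: "p \<in> fpoly \<Longrightarrow> q \<in> fpoly \<Longrightarrow> padd p q \<in> fpoly"
  by (erule fpoly_if_support_within) (auto simp: fa_pointwise)

lemma fpoly_psub: "p \<in> fpoly \<Longrightarrow> q \<in> fpoly \<Longrightarrow> psub p q \<in> fpoly"
  by (erule fpoly_if_support_within) (auto simp: fa_pointwise)

lemma fpoly_psmul: "p \<in> fpoly \<Longrightarrow> psmul c p \<in> fpoly"
  by (rule fpoly_if_support_within[of p p]) (auto simp: fa_pointwise)

lemma fpoly_psum: "finite A \<Longrightarrow> (\<And>x. x \<in> A \<Longrightarrow> F x \<in> fpoly) \<Longrightarrow> psum F A \<in> fpoly"
  by (induction A rule: finite_induct) (auto simp: psum_empty psum_insert intro: fpoly_padd)

lemma pmul_nonzero_split: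
  assumes "pmul p q w \<noteq> 0"
  obtains u v where "w = u @ v" "p u \<noteq> 0" "q v \<noteq> 0"
proof -
  obtain k where "p (take k w) * q (drop k w) \<noteq> 0"
    using assms by (auto simp: pmul_def elim: sum.not_neutral_contains_not_neutral)
  then show thesis using that[of "take k w" "drop k w"] by simp
qed

lemma fpoly_pmul:
  assumes "p \<in> fpoly" "q \<in> fpoly"
  shows "pmul p q \<in> fpoly"
proof (rule fpolyI)
  have "{w. pmul p q w \<noteq> 0} \<subseteq> (\<lambda>(u, v). u @ v) ` ({u. p u \<noteq> 0} \<times> {v. q v \<noteq> 0})"
    by (auto elim!: pmul_nonzero_split)
  then show "finite {w. pmul p q w \<noteq> 0}"
    by (rule finite_subset) (use assms in \<open>auto dest: fpoly_finite_support\<close>)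
next
  fix w assume "pmul p q w \<noteq> 0"
  then show "set w \<subseteq> gens"
    by (elim pmul_nonzero_split) (use assms in \<open>auto dest: fpoly_support_gens\<close>)
qed

lemma fpoly_tt: "i \<in> idx \<Longrightarrow> j \<in> idx \<Longrightarrow> tt i j r \<in> fpoly"
  by (auto simp: tt_def gens_def intro!: fpoly_pgen)

lemma falg_fpoly: "p \<in> falg Y \<Longrightarrow> Y \<subseteq> fpoly \<Longrightarrow> p \<in> fpoly"
  by (induction p rule: falg.induct) (auto intro: fpoly_padd fpoly_psmul fpoly_pmul)

lemma yideal_lincomb:
  "X \<in> yideal \<Longrightarrow> Y \<in> yideal \<Longrightarrow> (\<And>w. Z w = a * X w + b * Y w) \<Longrightarrow> Z \<in> yideal"
proof -
  assume "X \<in> yideal" "Y \<in> yideal" and Z: "\<And>w. Z w = a * X w + b * Y w"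
  have "Z = padd (psmul a X) (psmul b Y)" by (rule ext) (simp add: fa_pointwise Z)
  with \<open>X \<in> yideal\<close> \<open>Y \<in> yideal\<close> show "Z \<in> yideal" by (simp add: yideal.add yideal.smul)
qed

lemma yideal_scaled: "X \<in> yideal \<Longrightarrow> (\<And>w. Z w = a * X w) \<Longrightarrow> Z \<in> yideal"
  by (rule yideal_lincomb[OF _ yideal.zero, where b = 0]) (simp_all add: fa_pointwise)

lemma yideal_psum: "finite A \<Longrightarrow> (\<And>x. x \<in> A \<Longrightarrow> F x \<in> yideal) \<Longrightarrow> psum F A \<in> yideal"
  by (induction A rule: finite_induct) (auto simp: psum_empty psum_insert intro: yideal.intros)

section \<open>Generated subalgebras of \<open>Y(2)\<close>\<close>

lemma ygen_gen: "x \<in> Y \<Longrightarrow> x \<in> fpoly \<Longrightarrow> x \<in> ygen Y"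
  unfolding ygen_def by (auto intro!: bexI[of _ x] falg.gen yideal.zero)

lemma ygen_pone: "pone \<in> ygen Y"
  unfolding ygen_def by (auto intro!: bexI[of _ pone] falg.one yideal.zero)

lemma ygen_pzero: "pzero \<in> ygen Y"
proof -
  have "psub pzero (psmul 0 pone) = pzero" by (rule ext) (simp add: fa_pointwise)
  then show ?thesis
    unfolding ygen_def by (auto intro!: bexI[of _ "psmul 0 pone"] falg.smul falg.one yideal.zero)
qed

lemma ygen_equiv: "p \<in> fpoly \<Longrightarrow> q \<in> ygen Y \<Longrightarrow> psub p q \<in> yideal \<Longrightarrow> p \<in> ygen Y"
proof -
  assume p: "p \<in> fpoly" and "q \<in> ygen Y" and pq: "psub p q \<in> yideal"
  then obtain q' where q': "q' \<in> falg Y" "psub q q' \<in> yideal" by (auto simp: ygen_def)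
  have "psub p q' = padd (psub p q) (psub q q')" by (rule ext) (simp add: fa_pointwise)
  with pq q' have "psub p q' \<in> yideal" by (simp add: yideal.add)
  with p q' show ?thesis by (auto simp: ygen_def)
qed

lemma ygen_padd: "p \<in> ygen Y \<Longrightarrow> q \<in> ygen Y \<Longrightarrow> padd p q \<in> ygen Y"
proof -
  assume "p \<in> ygen Y" "q \<in> ygen Y"
  then obtain p' q' where "p \<in> fpoly" "q \<in> fpoly" "p' \<in> falg Y" "q' \<in> falg Y"
    "psub p p' \<in> yideal" "psub q q' \<in> yideal" by (auto simp: ygen_def)
  moreover have "psub (padd p q) (padd p' q') = padd (psub p p') (psub q q')"
    by (rule ext) (simp add: fa_pointwise)
  ultimately show ?thesis
    unfolding ygen_def by (auto intro!: bexI[of _ "padd p' q'"] fpoly_padd falg.add yideal.add)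
qed

lemma ygen_psmul: "p \<in> ygen Y \<Longrightarrow> psmul c p \<in> ygen Y"
proof -
  assume "p \<in> ygen Y"
  then obtain p' where "p \<in> fpoly" "p' \<in> falg Y" "psub p p' \<in> yideal" by (auto simp: ygen_def)
  moreover have "psub (psmul c p) (psmul c p') = psmul c (psub p p')"
    by (rule ext) (simp add: fa_pointwise algebra_simps)
  ultimately show ?thesis
    unfolding ygen_def by (auto intro!: bexI[of _ "psmul c p'"] fpoly_psmul falg.smul yideal.smul)
qed

lemma ygen_psub: "p \<in> ygen Y \<Longrightarrow> q \<in> ygen Y \<Longrightarrow> psub p q \<in> ygen Y"
proof -
  have "psub p q = padd p (psmul (-1) q)" by (rule ext) (simp add: fa_pointwise)
  then show "p \<in> ygen Y \<Longrightarrow> q \<in> ygen Y \<Longrightarrow> psub p q \<in> ygen Y"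
    by (simp add: ygen_padd ygen_psmul)
qed

lemma ygen_psum: "finite A \<Longrightarrow> (\<And>x. x \<in> A \<Longrightarrow> F x \<in> ygen Y) \<Longrightarrow> psum F A \<in> ygen Y"
  by (induction A rule: finite_induct) (auto simp: psum_empty psum_insert intro: ygen_pzero ygen_padd)

lemma ygen_pmul:
  assumes "Y \<subseteq> fpoly" "p \<in> ygen Y" "q \<in> ygen Y"
  shows "pmul p q \<in> ygen Y"
proof -
  obtain p' q' where pq: "q \<in> fpoly" "p' \<in> falg Y" "q' \<in> falg Y"
    "psub p p' \<in> yideal" "psub q q' \<in> yideal"
    using assms(2,3) by (auto simp: ygen_def)
  have "p' \<in> fpoly" using falg_fpoly[OF pq(2) assms(1)] .
  have "psub (pmul p q) (pmul p' q') = padd (pmul (psub p p') q) (pmul p' (psub q q'))"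
    by (rule ext) (simp add: fa_pointwise pmul_psub_left pmul_psub_right)
  moreover have "pmul (psub p p') q \<in> yideal" using pq by (simp add: yideal.rmul)
  moreover have "pmul p' (psub q q') \<in> yideal" using pq \<open>p' \<in> fpoly\<close> by (simp add: yideal.lmul)
  ultimately have "psub (pmul p q) (pmul p' q') \<in> yideal" by (simp add: yideal.add)
  moreover have "pmul p q \<in> fpoly" using assms(2,3) by (simp add: ygen_def fpoly_pmul)
  ultimately show ?thesis using pq falg.mul unfolding ygen_def by blast
qed

lemma ygen_minimal:
  assumes "X \<subseteq> ygen Y" "Y \<subseteq> fpoly"
  shows "ygen X \<subseteq> ygen Y"
proof
  have falg: "q \<in> ygen Y" if "q \<in> falg X" for q
    using that
    by (induction q rule: falg.induct)
      (use assms in \<open>auto intro: ygen_pone ygen_padd ygen_psmul ygen_pmul\<close>)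
  fix p assume "p \<in> ygen X"
  then obtain q where "p \<in> fpoly" "q \<in> falg X" "psub p q \<in> yideal" by (auto simp: ygen_def)
  then show "p \<in> ygen Y" by (blast intro: ygen_equiv falg)
qed

section \<open>\<open>\<sigma>\<^sub>1(u, F\<^sub>1\<^sub>1)\<close> as a multiple of \<open>s\<^sub>1\<^sub>1(u) - s\<^sub>-\<^sub>1\<^sub>,\<^sub>-\<^sub>1(u)\<close>\<close>

lemma ser_mul_cser_left: "ser_mul (cser f) B n = psum (\<lambda>m. psmul (f m) (B (n - m))) {..n}"
  by (simp add: ser_mul_def cser_def pmul_psmul_left)

lemma ser_mul_cser_right: "ser_mul B (cser f) n = psum (\<lambda>m. psmul (f (n - m)) (B m)) {..n}"
  by (simp add: ser_mul_def cser_def pmul_psmul_right)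

lemma ser_mul_liftc_left: "ser_mul (liftc X p q) B n = psmul (X p q) (B n)"
proof (rule ext)
  fix w
  have "ser_mul (liftc X p q) B n w = (\<Sum>m\<le>n. if m = 0 then X p q * B n w else 0)"
    unfolding liftc_def ser_mul_cser_left psum_apply by (rule sum.cong) (auto simp: psmul_apply)
  then show "ser_mul (liftc X p q) B n w = psmul (X p q) (B n) w"
    by (simp add: psmul_apply)
qed

lemma ser_mul_liftc_right: "ser_mul B (liftc X p q) n = psmul (X p q) (B n)"
proof (rule ext)
  fix w
  have "ser_mul B (liftc X p q) n w = (\<Sum>m\<le>n. if m = n then X p q * B n w else 0)"
    unfolding liftc_def ser_mul_cser_right psum_apply by (rule sum.cong) (auto simp: psmul_apply)
  then show "ser_mul B (liftc X p q) n w = psmul (X p q) (B n) w"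
    by (simp add: psmul_apply)
qed

definition Mfac_coeff :: "bool \<Rightarrow> nat \<Rightarrow> cmat4" where
  "Mfac_coeff sympl k = (\<lambda>p q. (if k = 0 then Id4 p q else 0) - cc k * Qmat sympl p q)"

lemma Mfac_eq_cser: "Mfac sympl p q = cser (\<lambda>k. Mfac_coeff sympl k p q)"
  by (simp add: Mfac_def Mfac_coeff_def)

definition trace_factor :: "bool \<Rightarrow> nat \<Rightarrow> complex" where
  "trace_factor sympl k = (if k = 0 then - 1/2 else 0) + (if sympl then 0 else cc k)"

definition sdiff :: "bool \<Rightarrow> nat \<Rightarrow> fa" where
  "sdiff sympl M = psub (sser sympl 1 1 M) (sser sympl (-1) (-1) M)"

lemma idx2_eq: "idx2 = {(-1, -1), (-1, 1), (1, -1), (1, 1)}"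
  by (auto simp: idx2_def idx_def)

lemma trace_A2_S1_Mfac_F11:
  fixes x :: "int \<Rightarrow> int \<Rightarrow> complex"
  shows "(\<Sum>p\<in>idx2. \<Sum>r\<in>idx2. F11_2 r p * (\<Sum>s\<in>idx2. Mfac_coeff sympl k s r *
            (\<Sum>t\<in>idx2. A2 p t * (if snd t = snd s then x (fst t) (fst s) else 0))))
         = trace_factor sympl k * (x 1 1 - x (-1) (-1))"
  by (cases sympl; simp add: idx2_eq Mfac_coeff_def trace_factor_def A2_def Id4_def Pmat_def
      Qmat_def F11_2_def tens_def Emat_def Etr_def theta_def F11_def Id2_def idx_def algebra_simps)

lemma sigma1_eq_sdiff_convolution: "sigma1 sympl n = psum (\<lambda>m. psmul (trace_factor sympl (n - m)) (sdiff sympl m)) {..n}"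
proof (rule ext)
  fix w
  define x where "x m i j = sser sympl i j m w" for m i j
  have S1_apply: "S1 sympl t s m w = (if snd t = snd s then x m (fst t) (fst s) else 0)" for t s m
    by (simp add: S1_def x_def pzero_apply)
  have "sigma1 sympl n w = (\<Sum>p\<in>idx2. \<Sum>r\<in>idx2. F11_2 r p * (\<Sum>s\<in>idx2. \<Sum>m\<le>n.
      Mfac_coeff sympl (n - m) s r * (\<Sum>t\<in>idx2. A2 p t * S1 sympl t s m w)))"
    by (simp add: sigma1_def mtr_def ser_sum_def mmul_def ser_mul_liftc_left ser_mul_liftc_right
        Mfac_eq_cser ser_mul_cser_right fa_pointwise)
  also have "\<dots> = (\<Sum>m\<le>n. \<Sum>p\<in>idx2. \<Sum>r\<in>idx2. F11_2 r p * (\<Sum>s\<in>idx2. Mfac_coeff sympl (n - m) s r *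
      (\<Sum>t\<in>idx2. A2 p t * (if snd t = snd s then x m (fst t) (fst s) else 0))))"
    by (simp add: S1_apply sum_distrib_left sum.swap[of _ "{..n}"])
  also have "\<dots> = (\<Sum>m\<le>n. trace_factor sympl (n - m) * (x m 1 1 - x m (-1) (-1)))"
    by (simp only: trace_A2_S1_Mfac_F11)
  also have "\<dots> = psum (\<lambda>m. psmul (trace_factor sympl (n - m)) (sdiff sympl m)) {..n} w"
    by (simp add: sdiff_def x_def fa_pointwise)
  finally show "sigma1 sympl n w = psum (\<lambda>m. psmul (trace_factor sympl (n - m)) (sdiff sympl m)) {..n} w" .
qed

lemma sser_coeff: "sser sympl i j M = psum (\<lambda>a. psmul (theta sympl a j)
    (psum (\<lambda>m. psmul ((-1) ^ (M - m)) (pmul (tt i a m) (tt (- j) (- a) (M - m)))) {..M})) idx"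
  by (simp add: sser_def ser_sum_def ser_smul_def ser_mul_def tser_def tnser_def pmul_psmul_right)

section \<open>The symmetry relation\<close>

lemma sum_alternating_reflect:
  fixes g :: "nat \<Rightarrow> nat \<Rightarrow> 'a :: comm_ring_1"
  shows "(-1) ^ M * (\<Sum>m\<le>M. (-1) ^ (M - m) * g m (M - m)) = (\<Sum>r\<le>M. (-1) ^ (M - r) * g (M - r) r)"
proof -
  have sign: "(-1) ^ M * (-1) ^ (M - m) = ((-1) ^ m :: 'a)" if "m \<le> M" for m
  proof -
    obtain d where "M = m + d" using \<open>m \<le> M\<close> le_Suc_ex by blast
    then show ?thesis by (simp add: power_add mult.assoc flip: power2_eq_square power_mult)
  qed
  have "(\<Sum>r\<le>M. (-1) ^ (M - r) * g (M - r) r) = (\<Sum>m\<le>M. (-1) ^ m * g m (M - m))"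
    by (rule sum.reindex_bij_witness[where i = "\<lambda>m. M - m" and j = "\<lambda>r. M - r"]) auto
  also have "\<dots> = (-1) ^ M * (\<Sum>m\<le>M. (-1) ^ (M - m) * g m (M - m))"
    by (simp add: sum_distrib_left sign flip: mult.assoc)
  finally show ?thesis ..
qed

lemma sum_alternating_differences:
  fixes c :: "nat \<Rightarrow> 'a :: comm_ring_1"
  assumes "c 0 = 0" "c (Suc N) = 0"
  shows "(\<Sum>r\<le>N. (-1) ^ (N - r) * (c (Suc r) - c r)) = 2 * (\<Sum>r\<le>Suc N. (-1) ^ (Suc N - r) * c r)"
proof -
  have shifted: "(\<Sum>r\<le>Suc N. (-1) ^ (Suc N - r) * c r) = (\<Sum>r\<le>N. (-1) ^ (N - r) * c (Suc r))"
    by (subst sum.atMost_Suc_shift) (simp add: assms)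
  have "(\<Sum>r\<le>Suc N. (-1) ^ (Suc N - r) * c r) = (\<Sum>r\<le>N. - ((-1) ^ (N - r) * c r))"
    by (simp add: assms(2)) (rule sum.cong, auto simp: Suc_diff_le)
  with shifted show ?thesis
    by (simp add: right_diff_distrib sum_subtractf sum_negf)
qed

text \<open>Coefficients of \<open>u\<^sup>-\<^sup>N\<close> in \<open>[t\<^sub>i\<^sub>j(u), t\<^sub>k\<^sub>l(-u)]\<close> and in
  \<open>t\<^sub>k\<^sub>j(u) t\<^sub>i\<^sub>l(-u) - t\<^sub>k\<^sub>j(-u) t\<^sub>i\<^sub>l(u)\<close>.\<close>

definition tcomm_neg :: "int \<Rightarrow> int \<Rightarrow> int \<Rightarrow> int \<Rightarrow> nat \<Rightarrow> fa" where
  "tcomm_neg i j k l N = psum (\<lambda>r. psmul ((-1) ^ (N - r)) (comm (tt i j r) (tt k l (N - r)))) {..N}"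

definition tcross_neg :: "int \<Rightarrow> int \<Rightarrow> int \<Rightarrow> int \<Rightarrow> nat \<Rightarrow> fa" where
  "tcross_neg i j k l N = psum (\<lambda>r. psmul ((-1) ^ (N - r))
     (psub (pmul (tt k j r) (tt i l (N - r))) (pmul (tt k j (N - r)) (tt i l r)))) {..N}"

lemma yrel_alternating_sum:
  "psum (\<lambda>r. psmul ((-1) ^ (N - r)) (yrel i j k l r (N - r))) {..N}
   = psub (psmul 2 (tcomm_neg i j k l (Suc N))) (tcross_neg i j k l N)"
proof (rule ext)
  fix w
  define c where "c r = comm (tt i j r) (tt k l (Suc N - r)) w" for r
  have "c 0 = 0" "c (Suc N) = 0" by (simp_all add: c_def tt_def pzero_apply)
  have "psum (\<lambda>r. psmul ((-1) ^ (N - r)) (yrel i j k l r (N - r))) {..N} w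
     = (\<Sum>r\<le>N. (-1) ^ (N - r) * (c (Suc r) - c r)) - tcross_neg i j k l N w"
    unfolding tcross_neg_def fa_pointwise sum_subtractf[symmetric]
    by (rule sum.cong) (auto simp: yrel_def c_def Suc_diff_le right_diff_distrib fa_pointwise)
  also have "\<dots> = 2 * (\<Sum>r\<le>Suc N. (-1) ^ (Suc N - r) * c r) - tcross_neg i j k l N w"
    by (simp only: sum_alternating_differences[OF \<open>c 0 = 0\<close> \<open>c (Suc N) = 0\<close>])
  also have "\<dots> = psub (psmul 2 (tcomm_neg i j k l (Suc N))) (tcross_neg i j k l N) w"
    by (simp add: tcomm_neg_def c_def fa_pointwise)
  finally show "psum (\<lambda>r. psmul ((-1) ^ (N - r)) (yrel i j k l r (N - r))) {..N} w
    = psub (psmul 2 (tcomm_neg i j k l (Suc N))) (tcross_neg i j k l N) w" .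
qed

text \<open>The defining relation \<open>(u - v) [t\<^sub>i\<^sub>j(u), t\<^sub>k\<^sub>l(v)] = t\<^sub>k\<^sub>j(u) t\<^sub>i\<^sub>l(v) - t\<^sub>k\<^sub>j(v) t\<^sub>i\<^sub>l(u)\<close>
  at \<open>v = -u\<close>.\<close>

lemma rtt_at_neg_in_yideal:
  assumes "i \<in> idx" "j \<in> idx" "k \<in> idx" "l \<in> idx"
  shows "psub (psmul 2 (tcomm_neg i j k l (Suc N))) (tcross_neg i j k l N) \<in> yideal"
proof -
  have "yrel i j k l r s \<in> yideal" for r s
    using assms by (intro yideal.rel) (unfold relators_def, blast)
  then show ?thesis
    unfolding yrel_alternating_sum[symmetric] by (intro yideal_psum finite_atMost yideal.smul)
qed

text \<open>After \<open>a \<mapsto> -a\<close>, each term of \<open>s\<^sub>-\<^sub>1\<^sub>,\<^sub>-\<^sub>1(-u)\<close> is the second half of the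
  commutator \<open>[t\<^sub>1\<^sub>a(u), t\<^sub>-\<^sub>1\<^sub>,\<^sub>-\<^sub>a(-u)]\<close> (note \<open>\<theta>\<^sub>-\<^sub>a\<^sub>,\<^sub>-\<^sub>1 = \<theta>\<^sub>a\<^sub>1\<close>).\<close>

lemma sser_sub_reflected:
  "psub (sser sympl 1 1 M) (psmul ((-1) ^ M) (sser sympl (-1) (-1) M))
   = psum (\<lambda>a. psmul (theta sympl a 1) (tcomm_neg 1 a (-1) (- a) M)) idx"
proof (rule ext)
  fix w
  define P where "P i j k l r s = pmul (tt i j r) (tt k l s) w" for i j k l r s
  have reflect: "(-1) ^ M * (\<Sum>m\<le>M. (-1) ^ (M - m) * P i j k l m (M - m))
      = (\<Sum>r\<le>M. (-1) ^ (M - r) * P i j k l (M - r) r)" for i j k l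
    by (rule sum_alternating_reflect)
  show "psub (sser sympl 1 1 M) (psmul ((-1) ^ M) (sser sympl (-1) (-1) M)) w
    = psum (\<lambda>a. psmul (theta sympl a 1) (tcomm_neg 1 a (-1) (- a) M)) idx w"
    apply (simp add: sser_coeff tcomm_neg_def comm_def idx_def fa_pointwise flip: P_def)
    apply (simp only: right_diff_distrib sum_subtractf distrib_left flip: reflect)
    apply (cases sympl; simp add: theta_def algebra_simps)
    done
qed

definition theta_sign :: "bool \<Rightarrow> complex" where
  "theta_sign sympl = (if sympl then -1 else 1)"

lemma tcross_neg_theta_sum:
  "psum (\<lambda>a. psmul (theta sympl a 1) (tcross_neg 1 a (-1) (- a) N)) idx
   = psmul (theta_sign sympl) (psub (sser sympl (-1) (-1) N) (psmul ((-1) ^ N) (sser sympl (-1) (-1) N)))"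
proof (rule ext)
  fix w
  define P where "P i j k l r s = pmul (tt i j r) (tt k l s) w" for i j k l r s
  have reflect: "(-1) ^ N * (\<Sum>m\<le>N. (-1) ^ (N - m) * P i j k l m (N - m))
      = (\<Sum>r\<le>N. (-1) ^ (N - r) * P i j k l (N - r) r)" for i j k l
    by (rule sum_alternating_reflect)
  show "psum (\<lambda>a. psmul (theta sympl a 1) (tcross_neg 1 a (-1) (- a) N)) idx w
    = psmul (theta_sign sympl) (psub (sser sympl (-1) (-1) N) (psmul ((-1) ^ N) (sser sympl (-1) (-1) N))) w"
    apply (simp add: sser_coeff tcross_neg_def idx_def fa_pointwise flip: P_def)
    apply (simp only: right_diff_distrib sum_subtractf distrib_left flip: reflect)
    apply (cases sympl; simp add: theta_def theta_sign_def algebra_simps)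
    done
qed

text \<open>Coefficient of \<open>u\<^sup>-\<^sup>N\<close> in the symmetry relation
  \<open>2u (s\<^sub>1\<^sub>1(u) - s\<^sub>-\<^sub>1\<^sub>,\<^sub>-\<^sub>1(-u)) = \<epsilon> (s\<^sub>-\<^sub>1\<^sub>,\<^sub>-\<^sub>1(u) - s\<^sub>-\<^sub>1\<^sub>,\<^sub>-\<^sub>1(-u))\<close>,
  \<open>\<epsilon> = theta_sign sympl\<close>.\<close>

lemma sser_symmetry_relation:
  "psub (psmul 2 (psub (sser sympl 1 1 (Suc N)) (psmul ((-1) ^ Suc N) (sser sympl (-1) (-1) (Suc N)))))
     (psmul (theta_sign sympl) (psub (sser sympl (-1) (-1) N) (psmul ((-1) ^ N) (sser sympl (-1) (-1) N))))
   \<in> yideal"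
proof -
  let ?rel = "\<lambda>a. psub (psmul 2 (tcomm_neg 1 a (-1) (- a) (Suc N))) (tcross_neg 1 a (-1) (- a) N)"
  have "psum (\<lambda>a. psmul (theta sympl a 1) (?rel a)) idx \<in> yideal"
    by (intro yideal_psum yideal.smul rtt_at_neg_in_yideal) (auto simp: idx_def)
  moreover have "psum (\<lambda>a. psmul (theta sympl a 1) (?rel a)) idx
     = psub (psmul 2 (psum (\<lambda>a. psmul (theta sympl a 1) (tcomm_neg 1 a (-1) (- a) (Suc N))) idx))
            (psum (\<lambda>a. psmul (theta sympl a 1) (tcross_neg 1 a (-1) (- a) N)) idx)"
    by (rule ext) (simp add: idx_def fa_pointwise algebra_simps)
  ultimately show ?thesis
    by (simp only: sser_sub_reflected tcross_neg_theta_sum)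
qed

lemma sser_odd_antisymmetric:
  "padd (sser sympl 1 1 (2 * m + 1)) (sser sympl (-1) (-1) (2 * m + 1)) \<in> yideal"
  using sser_symmetry_relation[of sympl "2 * m"]
  by (rule yideal_scaled[where a = "1/2"]) (simp add: fa_pointwise)

lemma sdiff_odd_equiv: "psub (sdiff sympl (2 * m + 1)) (psmul 2 (sser sympl 1 1 (2 * m + 1))) \<in> yideal"
  using sser_odd_antisymmetric[of sympl m]
  by (rule yideal_scaled[where a = "-1"]) (simp add: sdiff_def fa_pointwise)

lemma sdiff_even_equiv:
  "psub (sdiff sympl (2 * m + 2)) (psmul (- theta_sign sympl) (sser sympl 1 1 (2 * m + 1))) \<in> yideal"
  using sser_symmetry_relation[of sympl "2 * m + 1"] sser_odd_antisymmetric[of sympl m]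
  by (rule yideal_lincomb[where a = "1/2" and b = "theta_sign sympl"])
    (simp add: sdiff_def fa_pointwise algebra_simps)

section \<open>Comparing the two generating sets\<close>

lemma fpoly_sser: "i \<in> idx \<Longrightarrow> j \<in> idx \<Longrightarrow> sser sympl i j M \<in> fpoly"
  unfolding sser_coeff
  by (intro fpoly_psum fpoly_psmul fpoly_pmul fpoly_tt finite_atMost) (auto simp: idx_def)

lemma fpoly_sdiff: "sdiff sympl m \<in> fpoly"
  unfolding sdiff_def by (intro fpoly_psub fpoly_sser) (auto simp: idx_def)

lemma fpoly_sigma1: "sigma1 sympl n \<in> fpoly"
  unfolding sigma1_eq_sdiff_convolution by (intro fpoly_psum fpoly_psmul fpoly_sdiff finite_atMost)

lemma sdiff_0: "sdiff sympl 0 = pzero"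
  by (rule ext) (simp add: sdiff_def sser_coeff idx_def tt_def theta_def fa_pointwise)

lemma sdiff_in_ygen_if_odd:
  assumes odd: "\<And>k. sser sympl 1 1 (2 * k + 1) \<in> ygen Y"
  shows "sdiff sympl m \<in> ygen Y"
proof -
  have "m = 0 \<or> (\<exists>k. m = 2 * k + 1) \<or> (\<exists>k. m = 2 * k + 2)" by presburger
  then consider "m = 0" | k where "m = 2 * k + 1" | k where "m = 2 * k + 2" by blast
  then show ?thesis
  proof cases
    case 1
    then show ?thesis by (simp add: sdiff_0 ygen_pzero)
  next
    case (2 k)
    then show ?thesis using ygen_equiv[OF fpoly_sdiff ygen_psmul[OF odd] sdiff_odd_equiv] by simp
  next
    case (3 k)
    then show ?thesis using ygen_equiv[OF fpoly_sdiff ygen_psmul[OF odd] sdiff_even_equiv] by simp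
  qed
qed

lemma sigma1_in_ygen_if_odd:
  assumes "\<And>k. sser sympl 1 1 (2 * k + 1) \<in> ygen Y"
  shows "sigma1 sympl n \<in> ygen Y"
  unfolding sigma1_eq_sdiff_convolution using assms
  by (intro ygen_psum ygen_psmul finite_atMost sdiff_in_ygen_if_odd)

lemma sdiff_from_sigma1:
  "sdiff sympl m = psmul (-2)
     (psub (sigma1 sympl m) (psum (\<lambda>j. psmul (trace_factor sympl (m - j)) (sdiff sympl j)) {..<m}))"
proof (rule ext)
  fix w
  have "sigma1 sympl m w = - 1/2 * sdiff sympl m w
      + (\<Sum>j<m. trace_factor sympl (m - j) * sdiff sympl j w)"
    by (simp add: sigma1_eq_sdiff_convolution trace_factor_def cc_def fa_pointwise
        flip: lessThan_Suc_atMost)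
  then show "sdiff sympl m w = psmul (-2)
     (psub (sigma1 sympl m) (psum (\<lambda>j. psmul (trace_factor sympl (m - j)) (sdiff sympl j)) {..<m})) w"
    by (simp add: fa_pointwise)
qed

lemma sdiff_in_ygen_if_sigma1:
  assumes "\<And>n. sigma1 sympl n \<in> ygen Y"
  shows "sdiff sympl m \<in> ygen Y"
proof (induction m rule: less_induct)
  case (less m)
  then show ?case
    by (subst sdiff_from_sigma1)
      (intro ygen_psmul ygen_psub assms ygen_psum finite_lessThan, simp)
qed

lemma odd_in_ygen_if_sigma1:
  assumes "\<And>n. sigma1 sympl n \<in> ygen Y"
  shows "sser sympl 1 1 (2 * k + 1) \<in> ygen Y"
proof (rule ygen_equiv)
  show "sser sympl 1 1 (2 * k + 1) \<in> fpoly" by (rule fpoly_sser) (auto simp: idx_def)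
  show "psmul (1/2) (sdiff sympl (2 * k + 1)) \<in> ygen Y"
    using assms by (intro ygen_psmul sdiff_in_ygen_if_sigma1)
  show "psub (sser sympl 1 1 (2 * k + 1)) (psmul (1/2) (sdiff sympl (2 * k + 1))) \<in> yideal"
    using sdiff_odd_equiv[of sympl k]
    by (rule yideal_scaled[where a = "-1/2"]) (simp add: fa_pointwise field_simps)
qed

theorem proposition3:
  fixes sympl :: bool
  shows "ygen (ZYpm sympl \<union> range (sigma1 sympl))
       = ygen (ZYpm sympl \<union> {sser sympl 1 1 (2 * m + 1) | m. True})"
proof -
  let ?Z = "ZYpm sympl" and ?odd = "{sser sympl 1 1 (2 * m + 1) | m. True}"
  have Z: "?Z \<subseteq> fpoly" by (auto simp: ZYpm_def Ypm_def ygen_def)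
  have sigma1: "range (sigma1 sympl) \<subseteq> fpoly" by (auto intro: fpoly_sigma1)
  have odd: "?odd \<subseteq> fpoly" by (auto intro!: fpoly_sser simp: idx_def)
  have odd_gen: "sser sympl 1 1 (2 * k + 1) \<in> ygen (?Z \<union> ?odd)" for k
    using odd by (intro ygen_gen) auto
  have sigma1_gen: "sigma1 sympl n \<in> ygen (?Z \<union> range (sigma1 sympl))" for n
    using sigma1 by (intro ygen_gen) auto
  have "ygen (?Z \<union> range (sigma1 sympl)) \<subseteq> ygen (?Z \<union> ?odd)"
    using Z odd by (intro ygen_minimal) (blast intro: ygen_gen sigma1_in_ygen_if_odd odd_gen)+
  moreover have "ygen (?Z \<union> ?odd) \<subseteq> ygen (?Z \<union> range (sigma1 sympl))"
    using Z sigma1 by (intro ygen_minimal) (blast intro: ygen_gen odd_in_ygen_if_sigma1 sigma1_gen)+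
  ultimately show ?thesis by (rule equalityI)
qed

end
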